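(* Let $d \in \mathbb{N}$, $L \in \mathbb{N}$ with $L\geq 3$, $B \in \mathbb{N}$ with $B\geq 3$, $c > 0$, $q \in [1,2]$, and $s \in \mathbb{N}$ with $s \leq \min \{ d, \frac{B}{3} \}$. Then \[ \nu \cdot \frac{c^L s^{1 - \frac{2}{q}} / (2 \cdot 3^{2/q})}{M s}\, \vartheta_{M,y}^{(s)} \in \mathcal{H}_{(d,B,\dots,B,1),c}^q \quad \text{for all } M \in \mathbb{N},\ \nu \in \{ \pm 1 \},\ y \in [0,1]^d, \] where $B$ appears $L-1$ times in $(d,B,\dots,B,1)$.
   Context: Let $\varrho(x)=\max\{0,x\}$ (componentwise on vectors). For $M>0$, $\sigma\in\mathbb{R}$: $\Lambda_{M,\sigma}(t)=0$ if $t\le\sigma-\frac1M$, and $\Lambda_{M,\sigma}(t)=1-M|t-\sigma|$ if $t\ge\sigma-\frac1M$. For $y\in\mathbb{R}^d$, $s\in\{1,\dots,d\}$: $\vartheta^{(s)}_{M,y}(x)=\varrho\big(\sum_{i=1}^s\Lambda_{M,y_i}(x_i)-(s-1)\big)$, $x\in\mathbb{R}^d$. Neural networks: for $(N_0,\dots,N_L)$ and $\Phi=((W^i,b^i))_{i=1}^L$, $W^i\in\mathbb{R}^{N_i\times N_{i-1}}$, $b^i\in\mathbb{R}^{N_i}$, the realization is $R(\Phi)(x)=x^L$ with $x^0=x$, $x^i=\varrho(W^ix^{i-1}+b^i)$ for $1\le i\le L-1$, $x^L=W^Lx^{L-1}+b^L$. With entrywise $\ell^q$ norms and $\|\Phi\|_{\ell^q}=\max_i\max\{\|W^i\|_{\ell^q},\|b^i\|_{\ell^q}\}$,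 set $\mathcal{H}^q_{(N_0,\dots,N_L),c}=\{R(\Phi):\|\Phi\|_{\ell^q}\le c\}$. *)

theory Defs
  imports Complex_Main
begin

text \<open>Vectors in R^n are represented as functions nat => real, using indices 0..n-1
  (index i here corresponds to coordinate i+1 of the paper).
  A matrix in R^{m x n} is a function nat => nat => real, entries (i,j) with i<m, j<n.\<close>

definition relu :: "real \<Rightarrow> real" where
  "relu x = max 0 x"

definition Lambda :: "real \<Rightarrow> real \<Rightarrow> real \<Rightarrow> real" where
  "Lambda M \<sigma> t = (if t \<le> \<sigma> - 1 / M then 0 else 1 - M * \<bar>t - \<sigma>\<bar>)"

definition theta :: "nat \<Rightarrow> real \<Rightarrow> (nat \<Rightarrow> real) \<Rightarrow> (nat \<Rightarrow> real) \<Rightarrow> real" where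
  "theta s M y x = relu ((\<Sum>i<s. Lambda M (y i) (x i)) - (real s - 1))"

type_synonym layer = "(nat \<Rightarrow> nat \<Rightarrow> real) \<times> (nat \<Rightarrow> real)"

definition affine :: "layer \<Rightarrow> nat \<Rightarrow> nat \<Rightarrow> (nat \<Rightarrow> real) \<Rightarrow> (nat \<Rightarrow> real)" where
  "affine Wb m n x = (\<lambda>i. if i < n then (\<Sum>j<m. fst Wb i j * x j) + snd Wb i else 0)"

fun realize :: "nat list \<Rightarrow> layer list \<Rightarrow> (nat \<Rightarrow> real) \<Rightarrow> (nat \<Rightarrow> real)" where
  "realize (n0 # n1 # ns) [l] x = affine l n0 n1 x"
| "realize (n0 # n1 # ns) (l # l' # ls) x =
     realize (n1 # ns) (l' # ls) (\<lambda>i. relu (affine l n0 n1 x i))"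
| "realize _ _ x = x"

definition mat_lq :: "real \<Rightarrow> nat \<Rightarrow> nat \<Rightarrow> (nat \<Rightarrow> nat \<Rightarrow> real) \<Rightarrow> real" where
  "mat_lq q m n W = (\<Sum>i<m. \<Sum>j<n. \<bar>W i j\<bar> powr q) powr (1 / q)"

definition vec_lq :: "real \<Rightarrow> nat \<Rightarrow> (nat \<Rightarrow> real) \<Rightarrow> real" where
  "vec_lq q m b = (\<Sum>i<m. \<bar>b i\<bar> powr q) powr (1 / q)"

definition net_lq :: "real \<Rightarrow> nat list \<Rightarrow> layer list \<Rightarrow> real" where
  "net_lq q arch \<Phi> =
     Max ((\<lambda>i. max (mat_lq q (arch ! (i+1)) (arch ! i) (fst (\<Phi> ! i)))
                    (vec_lq q (arch ! (i+1)) (snd (\<Phi> ! i)))) ` {..<length \<Phi>})"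

definition H_class :: "real \<Rightarrow> nat list \<Rightarrow> real \<Rightarrow> ((nat \<Rightarrow> real) \<Rightarrow> (nat \<Rightarrow> real)) set" where
  "H_class q arch c = {realize arch \<Phi> | \<Phi>.
      length \<Phi> \<ge> 1 \<and> length arch = length \<Phi> + 1 \<and> net_lq q arch \<Phi> \<le> c}"

end

theory Submission
  imports Defs
begin

(* Since Lambda_{M,sigma}(t) = M relu(t - sigma + 1/M) - 2 M relu(t - sigma), theta^(s)_{M,y} is one
   ReLU of a linear combination of 2 s ReLU units of x.  The first layer computes these units,
   scaled by a = c / (3 s)^(1/q), together with a unit of constant value c/3; the second layer
   forms the combination, drawing the offset -(s - 1) from the constant unit (as a bias it could
   exceed c).  Its first output is a^2 theta / (2 M) >= 0, and the remaining L - 2 layers only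
   multiply this coordinate by c (the last one by nu c).  With this choice of a every layer has
   l^q norm at most c, using 1 <= q <= 2 and 3 s <= B, and the factors multiply to the constant
   of the statement. *)

lemma relu_of_nonneg: "0 \<le> x \<Longrightarrow> relu x = x"
  by (simp add: relu_def)

lemma relu_nonneg: "0 \<le> relu x"
  by (simp add: relu_def)

lemma relu_mult_nonneg: "0 \<le> a \<Longrightarrow> relu (a * x) = a * relu x"
  by (simp add: relu_def max_mult_distrib_left)

lemma Lambda_eq_relu:
  assumes "M > 0"
  shows "Lambda M \<sigma> t = M * relu (t - \<sigma> + 1 / M) - 2 * M * relu (t - \<sigma>)"
proof -
  have "1 / M > 0" using assms by simp
  then consider "t \<le> \<sigma> - 1 / M" | "\<sigma> - 1 / M < t" "t \<le> \<sigma>" | "\<sigma> < t" "\<sigma> - 1 / M < t"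
    by linarith
  then show ?thesis
  proof cases
    case 1
    then have "t - \<sigma> + 1 / M \<le> 0" "t - \<sigma> \<le> 0" using \<open>1 / M > 0\<close> by linarith+
    with 1 show ?thesis by (simp add: Lambda_def relu_def)
  qed (use assms in \<open>auto simp: Lambda_def relu_def field_simps\<close>)
qed

lemma theta_eq_relu:
  assumes "M > 0"
  shows "theta s M y x = relu (M * (\<Sum>i<s. relu (x i - y i + 1 / M))
    - 2 * M * (\<Sum>i<s. relu (x i - y i)) - (real s - 1))"
  using assms by (simp add: theta_def Lambda_eq_relu sum_subtractf sum_distrib_left)

lemma realize_Cons_Cons:
  "\<Phi> \<noteq> [] \<Longrightarrow>
    realize (n0 # n1 # ns) (l # \<Phi>) x = realize (n1 # ns) \<Phi> (\<lambda>i. relu (affine l n0 n1 x i))"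
  by (cases \<Phi>) auto

lemma net_lq_Cons:
  assumes "\<Phi> \<noteq> []"
  shows "net_lq q (n0 # n1 # ns) (l # \<Phi>) =
    max (max (mat_lq q n1 n0 (fst l)) (vec_lq q n1 (snd l))) (net_lq q (n1 # ns) \<Phi>)"
proof -
  have "{..<length (l # \<Phi>)} = insert 0 (Suc ` {..<length \<Phi>})"
    by (auto simp: image_iff less_Suc_eq_0_disj)
  then show ?thesis
    using assms by (simp add: net_lq_def image_image Max_insert lessThan_empty_iff)
qed

lemma H_class_affine:
  assumes "mat_lq q n1 n0 (fst l) \<le> c" and "vec_lq q n1 (snd l) \<le> c"
  shows "affine l n0 n1 \<in> H_class q [n0, n1] c"
  unfolding H_class_def
proof (intro CollectI exI conjI)
  show "affine l n0 n1 = realize [n0, n1] [l]"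
    by (simp add: fun_eq_iff)
  show "net_lq q [n0, n1] [l] \<le> c"
    using assms by (simp add: net_lq_def lessThan_Suc)
qed simp_all

lemma H_class_Cons_layer:
  assumes f: "f \<in> H_class q (n1 # ns) c"
    and "mat_lq q n1 n0 (fst l) \<le> c" and "vec_lq q n1 (snd l) \<le> c"
  shows "(\<lambda>x. f (\<lambda>i. relu (affine l n0 n1 x i))) \<in> H_class q (n0 # n1 # ns) c"
proof -
  from f obtain \<Phi> where f_eq: "f = realize (n1 # ns) \<Phi>" and "length \<Phi> \<ge> 1"
    and len: "length (n1 # ns) = length \<Phi> + 1" and norm: "net_lq q (n1 # ns) \<Phi> \<le> c"
    unfolding H_class_def by blast
  then have "\<Phi> \<noteq> []" by auto
  show ?thesis
    unfolding H_class_def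
  proof (intro CollectI exI conjI)
    show "(\<lambda>x. f (\<lambda>i. relu (affine l n0 n1 x i))) = realize (n0 # n1 # ns) (l # \<Phi>)"
      using \<open>\<Phi> \<noteq> []\<close> by (simp add: f_eq realize_Cons_Cons fun_eq_iff)
    show "net_lq q (n0 # n1 # ns) (l # \<Phi>) \<le> c"
      using \<open>\<Phi> \<noteq> []\<close> assms norm by (simp add: net_lq_Cons)
  qed (use len in simp_all)
qed

definition first_row :: "(nat \<Rightarrow> real) \<Rightarrow> nat \<Rightarrow> nat \<Rightarrow> real" where
  "first_row r k j = (if k = 0 then r j else 0)"

lemma affine_first_row:
  "affine (first_row r, \<lambda>_. 0) m n x = (\<lambda>i. if i = 0 \<and> 0 < n then \<Sum>j<m. r j * x j else 0)"
  by (simp add: affine_def first_row_def fun_eq_iff)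

lemma mat_lq_first_row:
  assumes "0 < n"
  shows "mat_lq q n m (first_row r) = vec_lq q m r"
proof -
  have "(\<Sum>k<n. \<Sum>j<m. \<bar>first_row r k j\<bar> powr q) =
      (\<Sum>k<n. if k = 0 then \<Sum>j<m. \<bar>r j\<bar> powr q else 0)"
    by (rule sum.cong) (simp_all add: first_row_def)
  then show ?thesis
    using assms by (simp add: mat_lq_def vec_lq_def)
qed

lemma vec_lq_zero: "vec_lq q m (\<lambda>_. 0) = 0"
  by (simp add: vec_lq_def)

lemma vec_lq_unit:
  assumes "0 < m" and "q \<noteq> 0"
  shows "vec_lq q m (\<lambda>j. if j = 0 then v else 0) = \<bar>v\<bar>"
proof -
  have "(\<Sum>j<m. \<bar>if j = 0 then v else 0\<bar> powr q) = \<bar>v\<bar> powr q"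
    using assms(1) by (simp add: if_distrib[of "\<lambda>t. \<bar>t\<bar> powr q"] cong: if_cong)
  then show ?thesis
    using assms(2) by (simp add: vec_lq_def powr_powr)
qed

lemma first_coordinate_scaling_in_H_class:
  assumes "0 < B" and "0 < q" and "\<bar>v\<bar> \<le> c"
  shows "\<exists>f \<in> H_class q (B # replicate n B @ [1]) c.
    \<forall>z. 0 \<le> z 0 \<longrightarrow> f z = (\<lambda>i. if i = 0 then v * c ^ n * z 0 else 0)"
proof (induction n)
  case 0
  let ?f = "affine (first_row (\<lambda>j. if j = 0 then v else 0), \<lambda>_. 0) B 1"
  have "?f \<in> H_class q [B, 1] c"
    using assms by (intro H_class_affine) (simp_all add: mat_lq_first_row vec_lq_unit vec_lq_zero)
  moreover have "?f z = (\<lambda>i. if i = 0 then v * z 0 else 0)" for z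
    using assms(1) by (simp add: affine_first_row if_distrib[of "\<lambda>t. t * _"] cong: if_cong)
  ultimately show ?case by (auto intro!: bexI[of _ ?f])
next
  case (Suc n)
  then obtain f where f: "f \<in> H_class q (B # replicate n B @ [1]) c"
    and f_eq: "\<And>z. 0 \<le> z 0 \<Longrightarrow> f z = (\<lambda>i. if i = 0 then v * c ^ n * z 0 else 0)"
    by blast
  let ?layer = "(first_row (\<lambda>j. if j = 0 then c else 0), \<lambda>_. 0)"
  let ?g = "\<lambda>z. f (\<lambda>i. relu (affine ?layer B B z i))"
  have "?g \<in> H_class q (B # B # replicate n B @ [1]) c"
    using assms f by (intro H_class_Cons_layer) (simp_all add: mat_lq_first_row vec_lq_unit vec_lq_zero)
  moreover have "?g z = (\<lambda>i. if i = 0 then v * c ^ Suc n * z 0 else 0)" if "0 \<le> z 0" for z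
  proof -
    have first: "relu (affine ?layer B B z 0) = c * z 0"
      using assms that by (simp add: affine_first_row relu_of_nonneg if_distrib[of "\<lambda>t. t * _"] cong: if_cong)
    have "?g z = (\<lambda>i. if i = 0 then v * c ^ n * relu (affine ?layer B B z 0) else 0)"
      by (rule f_eq) (rule relu_nonneg)
    then show ?thesis
      unfolding first by (simp add: fun_eq_iff mult_ac)
  qed
  ultimately show ?case by (auto intro!: bexI[of _ ?g])
qed

definition block_vec ::
    "nat \<Rightarrow> (nat \<Rightarrow> real) \<Rightarrow> (nat \<Rightarrow> real) \<Rightarrow> real \<Rightarrow> nat \<Rightarrow> real" where
  "block_vec s u v e k =
    (if k < s then u k else if k < 2 * s then v (k - s) else if k = 2 * s then e else 0)"

lemma sum_block_vec:
  assumes "2 * s < B"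
  shows "(\<Sum>k<B. block_vec s u v e k) = sum u {..<s} + sum v {..<s} + e"
proof -
  have "(\<Sum>k<B. block_vec s u v e k) = (\<Sum>k<B. (if k \<in> {..<s} then u k else 0)
      + (if k \<in> {s..<2 * s} then v (k - s) else 0) + (if k \<in> {2 * s} then e else 0))"
    by (rule sum.cong) (auto simp: block_vec_def)
  also have "\<dots> = sum u ({..<B} \<inter> {..<s}) + sum (\<lambda>k. v (k - s)) ({..<B} \<inter> {s..<2 * s})
      + sum (\<lambda>_. e) ({..<B} \<inter> {2 * s})"
    by (simp add: sum.distrib sum.inter_restrict)
  also have "\<dots> = sum u {..<s} + sum (\<lambda>k. v (k - s)) {0 + s..<s + s} + e"
  proof -
    have "{..<B} \<inter> {..<s} = {..<s}" and "{..<B} \<inter> {s..<2 * s} = {0 + s..<s + s}"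
      and "{..<B} \<inter> {2 * s} = {2 * s}"
      using assms by auto
    then show ?thesis by simp
  qed
  also have "sum (\<lambda>k. v (k - s)) {0 + s..<s + s} = sum v {0..<s}"
    by (subst sum.shift_bounds_nat_ivl) simp
  finally show ?thesis by (simp add: atLeast0LessThan)
qed

lemma block_vec_map:
  "f 0 = 0 \<Longrightarrow> f (block_vec s u v e k) = block_vec s (\<lambda>i. f (u i)) (\<lambda>i. f (v i)) (f e) k"
  by (simp add: block_vec_def)

lemma block_vec_mult:
  "block_vec s u v e k * block_vec s u' v' e' k =
    block_vec s (\<lambda>i. u i * u' i) (\<lambda>i. v i * v' i) (e * e') k"
  by (simp add: block_vec_def)

lemma vec_lq_block_vec:
  assumes "2 * s < B"
  shows "vec_lq q B (block_vec s u v e) =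
    ((\<Sum>i<s. \<bar>u i\<bar> powr q) + (\<Sum>i<s. \<bar>v i\<bar> powr q) + \<bar>e\<bar> powr q) powr (1 / q)"
  using assms by (simp add: vec_lq_def block_vec_map[of "\<lambda>t. \<bar>t\<bar> powr q"] sum_block_vec)

definition twin_selection :: "nat \<Rightarrow> real \<Rightarrow> nat \<Rightarrow> nat \<Rightarrow> real" where
  "twin_selection s a k j = (if k < 2 * s \<and> j = k mod s then a else 0)"

lemma sum_twin_selection:
  assumes "s \<le> d" and "\<And>j. g j 0 = 0"
  shows "(\<Sum>j<d. g j (twin_selection s a k j)) = block_vec s (\<lambda>i. g i a) (\<lambda>i. g i a) 0 k"
proof (cases "k < 2 * s")
  case True
  then have "k mod s < d"
    using assms(1) by (metis mod_less_divisor gr0I less_le_trans mult_0_right not_less0)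
  then have "(\<Sum>j<d. g j (twin_selection s a k j)) = g (k mod s) a"
    using assms(2) by (simp add: twin_selection_def True if_distrib[of "g _"] cong: if_cong)
  also have "\<dots> = block_vec s (\<lambda>i. g i a) (\<lambda>i. g i a) 0 k"
    using True by (simp add: block_vec_def le_mod_geq)
  finally show ?thesis .
qed (simp add: twin_selection_def block_vec_def assms(2))

lemma mat_lq_twin_selection:
  assumes "s \<le> d" and "2 * s < B"
  shows "mat_lq q B d (twin_selection s a) = (2 * real s * \<bar>a\<bar> powr q) powr (1 / q)"
proof -
  have "(\<Sum>j<d. \<bar>twin_selection s a k j\<bar> powr q) =
      block_vec s (\<lambda>_. \<bar>a\<bar> powr q) (\<lambda>_. \<bar>a\<bar> powr q) 0 k" for k
    using sum_twin_selection[OF assms(1), of "\<lambda>_ t. \<bar>t\<bar> powr q"] by simp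
  then show ?thesis
    using assms(2) by (simp add: mat_lq_def sum_block_vec mult.assoc)
qed

definition hat_layer ::
    "nat \<Rightarrow> real \<Rightarrow> real \<Rightarrow> real \<Rightarrow> (nat \<Rightarrow> real) \<Rightarrow> layer" where
  "hat_layer s a b0 M y =
    (twin_selection s a, block_vec s (\<lambda>i. a * (1 / M - y i)) (\<lambda>i. - (a * y i)) b0)"

definition sum_layer :: "nat \<Rightarrow> real \<Rightarrow> real \<Rightarrow> layer" where
  "sum_layer s a w = (first_row (block_vec s (\<lambda>_. a / 2) (\<lambda>_. - a) (- w)), \<lambda>_. 0)"

lemma relu_affine_hat_layer:
  assumes "s \<le> d" and "2 * s < B" and "0 \<le> a" and "0 \<le> b0"
  shows "(\<lambda>k. relu (affine (hat_layer s a b0 M y) d B x k)) =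
    block_vec s (\<lambda>i. a * relu (x i - y i + 1 / M)) (\<lambda>i. a * relu (x i - y i)) b0"
proof
  fix k
  have "(\<Sum>j<d. twin_selection s a k j * x j) = block_vec s (\<lambda>i. a * x i) (\<lambda>i. a * x i) 0 k"
    using sum_twin_selection[OF assms(1), of "\<lambda>j t. t * x j"] by (simp add: mult.commute)
  then have "affine (hat_layer s a b0 M y) d B x k =
      (if k < B then block_vec s (\<lambda>i. a * (x i - y i + 1 / M)) (\<lambda>i. a * (x i - y i)) b0 k else 0)"
    by (simp add: affine_def hat_layer_def block_vec_def algebra_simps)
  also have "\<dots> = block_vec s (\<lambda>i. a * (x i - y i + 1 / M)) (\<lambda>i. a * (x i - y i)) b0 k"
    using assms(2) by (simp add: block_vec_def)
  finally show "relu (affine (hat_layer s a b0 M y) d B x k) =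
      block_vec s (\<lambda>i. a * relu (x i - y i + 1 / M)) (\<lambda>i. a * relu (x i - y i)) b0 k"
    using assms(3,4) by (simp add: block_vec_map[of relu] relu_mult_nonneg relu_of_nonneg)
qed

lemma hat_sum_layers_eq_theta:
  assumes "s \<le> d" and "2 * s < B" and "0 \<le> a" and "0 < M" and "0 \<le> b0"
    and "w * b0 = a\<^sup>2 * (real s - 1) / (2 * M)"
  shows "(\<lambda>i. relu (affine (sum_layer s a w) B B
      (\<lambda>k. relu (affine (hat_layer s a b0 M y) d B x k)) i)) =
    (\<lambda>i. if i = 0 then a\<^sup>2 / (2 * M) * theta s M y x else 0)"
proof -
  let ?S1 = "\<Sum>i<s. relu (x i - y i + 1 / M)" and ?S2 = "\<Sum>i<s. relu (x i - y i)"
  have "(\<Sum>j<B. block_vec s (\<lambda>_. a / 2) (\<lambda>_. - a) (- w) j *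
      block_vec s (\<lambda>i. a * relu (x i - y i + 1 / M)) (\<lambda>i. a * relu (x i - y i)) b0 j) =
    a * a / 2 * ?S1 - a * a * ?S2 - w * b0"
    using assms(2) by (simp add: block_vec_mult sum_block_vec sum_distrib_left sum_negf mult_ac)
  also have "\<dots> = a\<^sup>2 / (2 * M) * (M * ?S1 - 2 * M * ?S2 - (real s - 1))"
    using assms(4,6) by (simp add: power2_eq_square field_simps)
  finally have "(\<Sum>j<B. block_vec s (\<lambda>_. a / 2) (\<lambda>_. - a) (- w) j *
      block_vec s (\<lambda>i. a * relu (x i - y i + 1 / M)) (\<lambda>i. a * relu (x i - y i)) b0 j) =
    a\<^sup>2 / (2 * M) * (M * ?S1 - 2 * M * ?S2 - (real s - 1))" .
  moreover have "relu (a\<^sup>2 / (2 * M) * t) = a\<^sup>2 / (2 * M) * relu t" for t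
    using assms(4) by (intro relu_mult_nonneg) simp
  ultimately show ?thesis
    unfolding relu_affine_hat_layer[OF assms(1,2,3,5)]
    using assms(2,4) by (simp add: sum_layer_def affine_first_row theta_eq_relu relu_def fun_eq_iff)
qed

lemma theta_network_eq:
  assumes f_eq: "\<And>z. 0 \<le> z 0 \<Longrightarrow> f z = (\<lambda>i. if i = 0 then v * z 0 else 0)"
    and "s \<le> d" and "2 * s < B" and "0 \<le> a" and "0 < M" and "0 \<le> b0"
    and "w * b0 = a\<^sup>2 * (real s - 1) / (2 * M)"
  shows "f (\<lambda>i. relu (affine (sum_layer s a w) B B
      (\<lambda>k. relu (affine (hat_layer s a b0 M y) d B x k)) i)) =
    (\<lambda>i. if i = 0 then v * a\<^sup>2 / (2 * M) * theta s M y x else 0)"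
proof -
  have "0 \<le> a\<^sup>2 / (2 * M) * theta s M y x"
    using assms(5) by (simp add: theta_def relu_nonneg)
  then show ?thesis
    using assms by (simp add: hat_sum_layers_eq_theta fun_eq_iff)
qed

lemma powr_divide_le:
  fixes x t q :: real
  assumes "0 \<le> x" and "1 \<le> t" and "1 \<le> q"
  shows "(x / t) powr q \<le> x powr q / t"
proof -
  have "t = t powr 1" using assms(2) by simp
  also have "\<dots> \<le> t powr q" using assms(2,3) by (intro powr_mono) auto
  finally show ?thesis
    using assms by (simp add: powr_divide divide_left_mono)
qed

lemma powr_one_div_le:
  fixes S c q :: real
  assumes "0 \<le> S" and "S \<le> c powr q" and "0 \<le> c" and "0 < q"
  shows "S powr (1 / q) \<le> c"
proof -
  have "S powr (1 / q) \<le> (c powr q) powr (1 / q)" using assms by (intro powr_mono2) auto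
  also have "\<dots> = c" using assms by (simp add: powr_powr)
  finally show ?thesis .
qed

lemma hat_layer_lq_le:
  assumes "s \<le> d" and "2 * s < B" and "1 \<le> q" and "0 \<le> c" and "0 \<le> a"
    and a: "3 * real s * a powr q = c powr q" and "1 \<le> M" and y: "\<forall>i<s. 0 \<le> y i \<and> y i \<le> 1"
  shows "mat_lq q B d (fst (hat_layer s a (c / 3) M y)) \<le> c"
    and "vec_lq q B (snd (hat_layer s a (c / 3) M y)) \<le> c"
proof -
  have "2 * real s * \<bar>a\<bar> powr q \<le> 3 * real s * a powr q"
    using assms(5) by simp
  then have "2 * real s * \<bar>a\<bar> powr q \<le> c powr q"
    unfolding a .
  then show "mat_lq q B d (fst (hat_layer s a (c / 3) M y)) \<le> c"
    using assms(1-4) by (simp add: hat_layer_def mat_lq_twin_selection powr_one_div_le)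
  have bounded: "\<bar>a * t\<bar> powr q \<le> a powr q" if "\<bar>t\<bar> \<le> 1" for t
    using that assms(3,5) by (intro powr_mono2) (auto simp: abs_mult mult_left_le)
  have "0 < 1 / M" and "1 / M \<le> 1"
    using assms(7) by auto
  have "\<bar>a * (1 / M - y i)\<bar> powr q \<le> a powr q \<and> \<bar>- (a * y i)\<bar> powr q \<le> a powr q"
    if "i < s" for i
  proof -
    have "0 \<le> y i" "y i \<le> 1" using y that by auto
    with \<open>0 < 1 / M\<close> \<open>1 / M \<le> 1\<close> have "\<bar>1 / M - y i\<bar> \<le> 1" "\<bar>- y i\<bar> \<le> 1"
      unfolding abs_le_iff by linarith+
    then show ?thesis
      using bounded[of "1 / M - y i"] bounded[of "- y i"] by simp
  qed
  then have "(\<Sum>i<s. \<bar>a * (1 / M - y i)\<bar> powr q) + (\<Sum>i<s. \<bar>- (a * y i)\<bar> powr q)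
      \<le> (\<Sum>i<s. a powr q) + (\<Sum>i<s. a powr q)"
    by (intro add_mono sum_mono) auto
  moreover have "(c / 3) powr q \<le> c powr q / 3"
    using assms(3,4) by (intro powr_divide_le) auto
  ultimately have "(\<Sum>i<s. \<bar>a * (1 / M - y i)\<bar> powr q) + (\<Sum>i<s. \<bar>- (a * y i)\<bar> powr q)
      + \<bar>c / 3\<bar> powr q \<le> c powr q"
    using a assms(4) by simp
  then show "vec_lq q B (snd (hat_layer s a (c / 3) M y)) \<le> c"
    using assms(2-4) by (simp add: hat_layer_def vec_lq_block_vec powr_one_div_le sum_nonneg)
qed

lemma sum_layer_lq_le:
  assumes "2 * s < B" and "1 \<le> q" and "0 \<le> c" and "0 \<le> a"
    and a: "3 * real s * a powr q = c powr q" and "0 \<le> w" and "w \<le> c / 2"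
  shows "mat_lq q B B (fst (sum_layer s a w)) \<le> c"
    and "vec_lq q B (snd (sum_layer s a w)) \<le> c"
proof -
  have "(a / 2) powr q \<le> a powr q / 2" and "(c / 2) powr q \<le> c powr q / 2"
    using assms powr_divide_le[of a 2 q] powr_divide_le[of c 2 q] by auto
  moreover have "w powr q \<le> (c / 2) powr q"
    using assms by (intro powr_mono2) auto
  ultimately have "real s * \<bar>a / 2\<bar> powr q + real s * \<bar>- a\<bar> powr q + \<bar>- w\<bar> powr q \<le> c powr q"
    using a assms(4,6) mult_left_mono[of "(a / 2) powr q" "a powr q / 2" "real s"] by simp
  then show "mat_lq q B B (fst (sum_layer s a w)) \<le> c"
    using assms(1-3) by (simp add: sum_layer_def mat_lq_first_row vec_lq_block_vec powr_one_div_le)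
  show "vec_lq q B (snd (sum_layer s a w)) \<le> c"
    using assms(3) by (simp add: sum_layer_def vec_lq_zero)
qed

lemma constant_unit_weight_le:
  fixes a c :: real and s M :: nat
  assumes "0 < c" and "1 \<le> s" and "1 \<le> M" and "a\<^sup>2 \<le> c\<^sup>2 / (3 * real s)"
  shows "3 * a\<^sup>2 * (real s - 1) / (2 * real M * c) \<le> c / 2"
proof -
  have "3 * a\<^sup>2 * (real s - 1) / (2 * real M * c)
      \<le> 3 * (c\<^sup>2 / (3 * real s)) * (real s - 1) / (2 * real M * c)"
    using assms by (intro divide_right_mono mult_right_mono) auto
  also have "\<dots> = c / 2 * ((real s - 1) / (real s * real M))"
    using assms by (simp add: power2_eq_square field_simps)
  also have "\<dots> \<le> c / 2"
  proof (rule mult_left_le)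
    have "real s \<le> real s * real M" using assms by simp
    then have "real s - 1 \<le> real s * real M" by linarith
    then show "(real s - 1) / (real s * real M) \<le> 1" using assms by simp
  qed (use assms in simp)
  finally show ?thesis .
qed

lemma theta_in_H_class:
  fixes d B s n M :: nat and c q \<nu> :: real
  assumes "1 \<le> q" and "q \<le> 2" and "0 < c" and "1 \<le> s" and "s \<le> d" and "3 * s \<le> B"
    and "1 \<le> M" and "\<bar>\<nu>\<bar> \<le> 1" and "\<forall>i<s. 0 \<le> y i \<and> y i \<le> 1"
  shows "(\<lambda>x k. if k = 0 then \<nu> * c ^ (n + 3) / (2 * (3 * real s) powr (2 / q) * real M)
      * theta s (real M) y x else 0) \<in> H_class q (d # B # B # replicate n B @ [1]) c"
proof -
  define a where "a = c / (3 * real s) powr (1 / q)"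
  define w where "w = 3 * a\<^sup>2 * (real s - 1) / (2 * real M * c)"
  have B: "2 * s < B" and "0 < q" and "0 \<le> a"
    using assms by (auto simp: a_def)
  have "3 * real s > 0" using assms by simp
  then have a_powr: "3 * real s * a powr q = c powr q"
    using \<open>0 < q\<close> by (simp add: a_def powr_divide powr_powr)
  have a_sq: "a\<^sup>2 = c\<^sup>2 / (3 * real s) powr (2 / q)"
    using \<open>3 * real s > 0\<close> by (simp add: a_def power_divide powr_power)
  have "3 * real s \<le> (3 * real s) powr (2 / q)"
    using assms powr_mono[of 1 "2 / q" "3 * real s"] by simp
  then have "a\<^sup>2 \<le> c\<^sup>2 / (3 * real s)"
    unfolding a_sq using \<open>3 * real s > 0\<close> by (intro divide_left_mono) auto
  then have "w \<le> c / 2"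
    unfolding w_def using assms by (intro constant_unit_weight_le) auto
  have "0 \<le> w"
    using assms by (simp add: w_def)
  have "\<bar>\<nu> * c\<bar> \<le> c"
    using assms by (simp add: abs_mult mult_left_le_one_le)
  then obtain f where f: "f \<in> H_class q (B # replicate n B @ [1]) c"
    and f_eq: "\<And>z. 0 \<le> z 0 \<Longrightarrow> f z = (\<lambda>i. if i = 0 then \<nu> * c * c ^ n * z 0 else 0)"
    using B \<open>0 < q\<close> first_coordinate_scaling_in_H_class[of B q "\<nu> * c" c n] by auto
  let ?net = "\<lambda>x. f (\<lambda>i. relu (affine (sum_layer s a w) B B
    (\<lambda>k. relu (affine (hat_layer s a (c / 3) (real M) y) d B x k)) i))"
  have "?net \<in> H_class q (d # B # B # replicate n B @ [1]) c"
    using assms B a_powr \<open>0 \<le> a\<close> \<open>0 \<le> w\<close> \<open>w \<le> c / 2\<close>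
    by (intro H_class_Cons_layer f hat_layer_lq_le sum_layer_lq_le) auto
  moreover have "?net = (\<lambda>x k. if k = 0 then \<nu> * c ^ (n + 3) / (2 * (3 * real s) powr (2 / q) * real M)
      * theta s (real M) y x else 0)"
  proof -
    have "w * (c / 3) = a\<^sup>2 * (real s - 1) / (2 * real M)"
      using assms by (simp add: w_def)
    moreover have "\<nu> * c * c ^ n * a\<^sup>2 / (2 * real M) =
        \<nu> * c ^ (n + 3) / (2 * (3 * real s) powr (2 / q) * real M)"
      unfolding a_sq by (simp add: power_add eval_nat_numeral mult_ac)
    ultimately show ?thesis
      using assms B \<open>0 \<le> a\<close>
      by (simp add: theta_network_eq[of f "\<nu> * c * c ^ n", OF f_eq] fun_eq_iff)
  qed
  ultimately show ?thesis by simp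
qed

theorem lemma2p5:
  fixes d L B s :: nat and c q :: real
  assumes "L \<ge> 3" and "B \<ge> 3" and "c > 0" and "1 \<le> q" and "q \<le> 2"
    and "1 \<le> s" and "s \<le> d" and "real s \<le> real B / 3"
  shows "\<forall>(M::nat) (\<nu>::real) (y::nat \<Rightarrow> real).
     M \<ge> 1 \<longrightarrow> \<nu> \<in> {-1, 1} \<longrightarrow> (\<forall>i<d. 0 \<le> y i \<and> y i \<le> 1) \<longrightarrow>
     (\<lambda>x. \<lambda>k. if k = 0 then
         \<nu> * ((c ^ L * real s powr (1 - 2 / q) / (2 * 3 powr (2 / q))) / (real M * real s))
           * theta s (real M) y x
        else 0)
     \<in> H_class q (d # replicate (L - 1) B @ [1]) c"
proof (intro allI impI, goal_cases)
  case (1 M \<nu> y)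
  then have "\<bar>\<nu>\<bar> \<le> 1" and "\<forall>i<s. 0 \<le> y i \<and> y i \<le> 1"
    using \<open>s \<le> d\<close> by auto
  then have net: "(\<lambda>x k. if k = 0 then \<nu> * c ^ (L - 3 + 3) / (2 * (3 * real s) powr (2 / q) * real M)
      * theta s (real M) y x else 0) \<in> H_class q (d # B # B # replicate (L - 3) B @ [1]) c"
    using assms 1 by (intro theta_in_H_class) auto
  have arch: "d # B # B # replicate (L - 3) B @ [1] = d # replicate (L - 1) B @ [1]"
    using assms(1) by (simp add: numeral_3_eq_3 Suc_diff_le flip: replicate_Suc)
  have "real s powr (1 - 2 / q) = real s / real s powr (2 / q)"
    using assms by (simp add: powr_diff)
  then have const: "\<nu> * c ^ (L - 3 + 3) / (2 * (3 * real s) powr (2 / q) * real M) =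
      \<nu> * ((c ^ L * real s powr (1 - 2 / q) / (2 * 3 powr (2 / q))) / (real M * real s))"
    using assms 1 by (simp add: powr_mult field_simps)
  show ?case
    using net unfolding const arch .
qed

end
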